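(* Let $k$ be an algebraically closed field of characteristic zero and let $X\subset\mathbb P^n$ be a chain of closed subvarieties $X_1,\dots,X_\ell$ with saturated ideal $I_X=\bigcap_iI_{X_i}\subset k[x_0,\dots,x_n]$, such that for integers $n_0=0<n_1<\cdots<n_\ell=n$ one has $X_i\subset\{x_0=\cdots=x_{n_{i-1}-1}=0,\ x_{n_i+1}=\cdots=x_n=0\}$. Let $T_i=\langle x_{n_{i-1}},\dots,x_{n_i-1}\rangle\langle x_{n_i+1},\dots,x_n\rangle$ for $i=1,\dots,\ell-1$. Then for any monomial order $\prec$ on $k[x_0,\dots,x_n]$, \[ \mathrm{in}_\prec(I_X)=\sum_{i=1}^\ell\langle\mathrm{in}_\prec(I_{X_i}\cap k[x_{n_{i-1}},\dots,x_{n_i}])\rangle+\sum_{i=1}^{\ell-1}T_i=\sum_{i=1}^\ell\langle\mathrm{in}_\prec(I_X\cap k[x_{n_{i-1}},\dots,x_{n_i}])\rangle+\sum_{i=1}^{\ell-1}T_i, \] where each initial ideal $\mathrm{in}_\prec(J\cap k[x_{n_{i-1}},\dots,x_{n_i}])$ is computed in $k[x_{n_{i-1}},\dots,x_{n_i}]$ with the restricted order and $\langle\cdot\rangle$ denotes the generated ideal in $k[x_0,\dots,x_n]$.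
   Context: A chain of subvarieties means $X=\bigcup_iX_i$ and $X_i\cap X_j\neq\emptyset$ iff $|i-j|=1$; $I_{X_i}$ is the saturated homogeneous ideal of $X_i$. *)

theory Defs
  imports "HOL-Library.Poly_Mapping" "HOL-Computational_Algebra.Polynomial"
begin

text \<open>Multivariate polynomials over a field: monomials are finitely supported
  exponent vectors nat =>0 nat (variable x_j has index j), polynomials are finitely
  supported coefficient functions on monomials (ring structure from Poly_Mapping).\<close>

type_synonym monom = "nat \<Rightarrow>\<^sub>0 nat"
type_synonym 'a mpoly = "monom \<Rightarrow>\<^sub>0 'a"

definition alg_closed :: "'a::field itself \<Rightarrow> bool" where
  "alg_closed _ \<longleftrightarrow> (\<forall>p::'a poly. degree p > 0 \<longrightarrow> (\<exists>x. poly p x = 0))"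

definition mvars :: "('a::zero) mpoly \<Rightarrow> nat set" where
  "mvars p = (\<Union>m\<in>Poly_Mapping.keys p. Poly_Mapping.keys (m::monom))"

definition polys_in :: "nat set \<Rightarrow> ('a::zero) mpoly set" where
  "polys_in V = {p. mvars p \<subseteq> V}"

definition monoms_in :: "nat set \<Rightarrow> monom set" where
  "monoms_in V = {m. Poly_Mapping.keys m \<subseteq> V}"

definition mdeg :: "monom \<Rightarrow> nat" where
  "mdeg m = (\<Sum>j\<in>Poly_Mapping.keys m. Poly_Mapping.lookup m j)"

definition homogeneous :: "('a::zero) mpoly \<Rightarrow> bool" where
  "homogeneous p \<longleftrightarrow> (\<forall>m\<in>Poly_Mapping.keys p. \<forall>m'\<in>Poly_Mapping.keys p. mdeg m = mdeg m')"

definition mpoly_eval :: "(nat \<Rightarrow> 'a::comm_semiring_1) \<Rightarrow> 'a mpoly \<Rightarrow> 'a" where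
  "mpoly_eval a p = (\<Sum>m\<in>Poly_Mapping.keys p. Poly_Mapping.lookup p m * (\<Prod>j\<in>Poly_Mapping.keys m. a j ^ Poly_Mapping.lookup m j))"

definition monom_poly :: "monom \<Rightarrow> ('a::{zero,one}) mpoly" where
  "monom_poly m = Poly_Mapping.single m 1"

definition var :: "nat \<Rightarrow> ('a::{zero,one}) mpoly" where
  "var j = monom_poly (Poly_Mapping.single j 1)"

definition is_ideal :: "nat \<Rightarrow> ('a::comm_ring_1) mpoly set \<Rightarrow> bool" where
  "is_ideal n I \<longleftrightarrow> I \<subseteq> polys_in {0..n} \<and> 0 \<in> I \<and>
     (\<forall>f\<in>I. \<forall>g\<in>I. f + g \<in> I) \<and> (\<forall>f\<in>I. \<forall>h\<in>polys_in {0..n}. h * f \<in> I)"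

definition ideal_gen :: "nat \<Rightarrow> ('a::comm_ring_1) mpoly set \<Rightarrow> 'a mpoly set" where
  "ideal_gen n G = \<Inter>{I. is_ideal n I \<and> G \<subseteq> I}"

text \<open>Points of P^n are represented by their nonzero homogeneous coordinate vectors
  (a j = 0 for j > n). A projective set is represented by its affine cone minus 0.\<close>
definition proj_points :: "nat \<Rightarrow> (nat \<Rightarrow> 'a::field) set" where
  "proj_points n = {a. (\<forall>j>n. a j = 0) \<and> (\<exists>j\<le>n. a j \<noteq> 0)}"

definition proj_zero_set :: "nat \<Rightarrow> ('a::field) mpoly set \<Rightarrow> (nat \<Rightarrow> 'a) set" where
  "proj_zero_set n F = {a \<in> proj_points n. \<forall>f\<in>F. mpoly_eval a f = 0}"

definition proj_closed :: "nat \<Rightarrow> (nat \<Rightarrow> 'a::field) set \<Rightarrow> bool" where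
  "proj_closed n Z \<longleftrightarrow> (\<exists>F. F \<subseteq> polys_in {0..n} \<and> (\<forall>f\<in>F. homogeneous f) \<and>
      Z = proj_zero_set n F)"

definition proj_variety :: "nat \<Rightarrow> (nat \<Rightarrow> 'a::field) set \<Rightarrow> bool" where
  "proj_variety n Z \<longleftrightarrow> proj_closed n Z \<and> Z \<noteq> {} \<and>
     (\<forall>Z1 Z2. proj_closed n Z1 \<longrightarrow> proj_closed n Z2 \<longrightarrow> Z = Z1 \<union> Z2 \<longrightarrow> Z = Z1 \<or> Z = Z2)"

definition vanishing_ideal :: "nat \<Rightarrow> (nat \<Rightarrow> 'a::field) set \<Rightarrow> 'a mpoly set" where
  "vanishing_ideal n Z = {f \<in> polys_in {0..n}. \<forall>a\<in>Z. mpoly_eval a f = 0}"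

text \<open>Monomial order on k[x_0,...,x_n]: ord a b means a \<preceq> b.\<close>
definition monomial_order :: "nat \<Rightarrow> (monom \<Rightarrow> monom \<Rightarrow> bool) \<Rightarrow> bool" where
  "monomial_order n ord \<longleftrightarrow>
     (\<forall>a\<in>monoms_in {0..n}. ord a a) \<and>
     (\<forall>a\<in>monoms_in {0..n}. \<forall>b\<in>monoms_in {0..n}. ord a b \<and> ord b a \<longrightarrow> a = b) \<and>
     (\<forall>a\<in>monoms_in {0..n}. \<forall>b\<in>monoms_in {0..n}. \<forall>c\<in>monoms_in {0..n}.
        ord a b \<and> ord b c \<longrightarrow> ord a c) \<and>
     (\<forall>a\<in>monoms_in {0..n}. \<forall>b\<in>monoms_in {0..n}. ord a b \<or> ord b a) \<and>
     (\<forall>a\<in>monoms_in {0..n}. ord 0 a) \<and>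
     (\<forall>a\<in>monoms_in {0..n}. \<forall>b\<in>monoms_in {0..n}. \<forall>c\<in>monoms_in {0..n}.
        ord a b \<longrightarrow> ord (a + c) (b + c)) \<and>
     wfP (\<lambda>a b. a \<in> monoms_in {0..n} \<and> b \<in> monoms_in {0..n} \<and> ord a b \<and> a \<noteq> b)"

definition lead_monom :: "(monom \<Rightarrow> monom \<Rightarrow> bool) \<Rightarrow> ('a::zero) mpoly \<Rightarrow> monom" where
  "lead_monom ord f = (THE m. m \<in> Poly_Mapping.keys f \<and> (\<forall>m'\<in>Poly_Mapping.keys f. ord m' m))"

text \<open>The initial ideal of J inside k[x_0..x_n] is ideal_gen n (lead_monoms ord J); for
  J \<subseteq> k[x_j : j \<in> V] the ideal of k[x_0..x_n] generated by its initial ideal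
  (computed in k[x_j : j \<in> V] with the restricted order) is the same.\<close>
definition lead_monoms :: "(monom \<Rightarrow> monom \<Rightarrow> bool) \<Rightarrow> ('a::{zero,one}) mpoly set \<Rightarrow> 'a mpoly set" where
  "lead_monoms ord J = {monom_poly (lead_monom ord f) | f. f \<in> J \<and> f \<noteq> 0}"

definition initial_ideal :: "nat \<Rightarrow> (monom \<Rightarrow> monom \<Rightarrow> bool) \<Rightarrow> ('a::comm_ring_1) mpoly set \<Rightarrow> 'a mpoly set" where
  "initial_ideal n ord J = ideal_gen n (lead_monoms ord J)"

end

theory Submission
  imports Defs
begin

text \<open>
  A leading monomial of an element of I_X either is divisible by some x_a x_b with
  n_(i-1) \<le> a < n_i < b, hence lies in the ideal generated by T_i, or involves only the
  variables x_(n_(i-1)),...,x_(n_i) of a single block; in the second case dropping every term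
  with a variable outside the block keeps the leading term and leaves an element of I_(X_i).
  Conversely the products x_a x_b vanish on every component, and I_(X_i) \<inter> k[block i] lies in
  I_X: on the block coordinates any other component is concentrated in the endpoint coordinate
  x_p shared by X_i and its neighbour, while a polynomial vanishing on X_i has no pure power of
  x_p among its terms, since X_i contains the line through the coordinate point e_p and the
  field is infinite.
\<close>

lemma keys_in_monoms_in: "f \<in> polys_in V \<Longrightarrow> m \<in> Poly_Mapping.keys f \<Longrightarrow> m \<in> monoms_in V"
  unfolding polys_in_def monoms_in_def mvars_def by auto

context
  fixes n ord
  assumes mo: "monomial_order n ord"
begin

lemma monomial_order_refl: "a \<in> monoms_in {0..n} \<Longrightarrow> ord a a"
  using mo unfolding monomial_order_def by blast

lemma monomial_order_antisym:
  "a \<in> monoms_in {0..n} \<Longrightarrow> b \<in> monoms_in {0..n} \<Longrightarrow> ord a b \<Longrightarrow> ord b a \<Longrightarrow> a = b"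
  using mo unfolding monomial_order_def by blast

lemma monomial_order_trans:
  "a \<in> monoms_in {0..n} \<Longrightarrow> b \<in> monoms_in {0..n} \<Longrightarrow> c \<in> monoms_in {0..n} \<Longrightarrow>
    ord a b \<Longrightarrow> ord b c \<Longrightarrow> ord a c"
  using mo unfolding monomial_order_def by blast

lemma monomial_order_total: "a \<in> monoms_in {0..n} \<Longrightarrow> b \<in> monoms_in {0..n} \<Longrightarrow> ord a b \<or> ord b a"
  using mo unfolding monomial_order_def by blast

lemma exists_greatest_monom:
  assumes "finite K" "K \<noteq> {}" "K \<subseteq> monoms_in {0..n}"
  shows "\<exists>m\<in>K. \<forall>m'\<in>K. ord m' m"
  using assms
proof (induction K rule: finite_ne_induct)
  case (singleton x)
  then show ?case using monomial_order_refl by auto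
next
  case (insert x F)
  then obtain m where m: "m \<in> F" "\<forall>m'\<in>F. ord m' m" by auto
  have xm: "x \<in> monoms_in {0..n}" "m \<in> monoms_in {0..n}" using insert m by auto
  show ?case
  proof (cases "ord x m")
    case True
    then show ?thesis using m by auto
  next
    case False
    then have "ord m x" using monomial_order_total xm by blast
    then have "\<forall>m'\<in>F. ord m' x" using m monomial_order_trans xm insert.prems by blast
    then show ?thesis using monomial_order_refl xm by auto
  qed
qed

lemma lead_monom_eqI:
  assumes f: "f \<in> polys_in {0..n}"
    and M: "M \<in> Poly_Mapping.keys f" "\<forall>m'\<in>Poly_Mapping.keys f. ord m' M"
  shows "lead_monom ord f = M"
  unfolding lead_monom_def
proof (rule the_equality)
  show "M \<in> Poly_Mapping.keys f \<and> (\<forall>m'\<in>Poly_Mapping.keys f. ord m' M)" using M by blast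
  fix m assume m: "m \<in> Poly_Mapping.keys f \<and> (\<forall>m'\<in>Poly_Mapping.keys f. ord m' m)"
  have "m \<in> monoms_in {0..n}" "M \<in> monoms_in {0..n}" using m M f keys_in_monoms_in by blast+
  then show "m = M" using m M monomial_order_antisym by blast
qed

lemma lead_monom_greatest:
  assumes f: "f \<in> polys_in {0..n}" and "f \<noteq> 0"
  shows "lead_monom ord f \<in> Poly_Mapping.keys f"
    and "\<forall>m\<in>Poly_Mapping.keys f. ord m (lead_monom ord f)"
proof -
  obtain M where M: "M \<in> Poly_Mapping.keys f" "\<forall>m\<in>Poly_Mapping.keys f. ord m M"
    using exists_greatest_monom[of "Poly_Mapping.keys f"] \<open>f \<noteq> 0\<close> keys_in_monoms_in[OF f]
    by auto
  then show "lead_monom ord f \<in> Poly_Mapping.keys f"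
    and "\<forall>m\<in>Poly_Mapping.keys f. ord m (lead_monom ord f)"
    using lead_monom_eqI[OF f M] by simp_all
qed

lemma lead_monom_keys_subset:
  assumes "f \<in> polys_in {0..n}" "f \<noteq> 0" "g \<in> polys_in {0..n}"
    and "Poly_Mapping.keys g \<subseteq> Poly_Mapping.keys f" "lead_monom ord f \<in> Poly_Mapping.keys g"
  shows "lead_monom ord g = lead_monom ord f"
  using assms lead_monom_eqI[of g] lead_monom_greatest[of f] by blast

end

lemma monom_poly_mult: "(monom_poly a :: 'a::comm_ring_1 mpoly) * monom_poly b = monom_poly (a + b)"
  unfolding monom_poly_def by (simp add: mult_single)

lemma keys_monom_poly: "Poly_Mapping.keys (monom_poly M :: 'a::comm_ring_1 mpoly) = {M}"
  unfolding monom_poly_def by simp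

lemma monom_poly_nonzero: "(monom_poly M :: 'a::comm_ring_1 mpoly) \<noteq> 0"
  using keys_monom_poly[of M] by (metis empty_not_insert keys_zero)

lemma monom_poly_in_polys_in:
  "Poly_Mapping.keys M \<subseteq> V \<Longrightarrow> (monom_poly M :: 'a::comm_ring_1 mpoly) \<in> polys_in V"
  by (simp add: polys_in_def mvars_def keys_monom_poly)

lemma monom_split_off_two_vars:
  fixes M :: monom
  assumes "a \<in> Poly_Mapping.keys M" "b \<in> Poly_Mapping.keys M" "a \<noteq> b"
  shows "\<exists>M'. Poly_Mapping.keys M' \<subseteq> Poly_Mapping.keys M \<and>
    M = M' + (Poly_Mapping.single a 1 + Poly_Mapping.single b 1)"
proof (intro exI conjI)
  let ?M' = "M - Poly_Mapping.single a 1 - Poly_Mapping.single b 1"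
  show "Poly_Mapping.keys ?M' \<subseteq> Poly_Mapping.keys M"
    by (auto simp: in_keys_iff lookup_minus)
  show "M = ?M' + (Poly_Mapping.single a 1 + Poly_Mapping.single b 1)"
    using assms by (intro poly_mapping_eqI)
      (auto simp: in_keys_iff lookup_add lookup_minus lookup_single when_def)
qed

lemma keys_two_vars:
  assumes "a \<noteq> b"
  shows "Poly_Mapping.keys (Poly_Mapping.single a (1::nat) + Poly_Mapping.single b 1) = {a, b}"
proof (rule set_eqI)
  fix k
  show "k \<in> Poly_Mapping.keys (Poly_Mapping.single a (1::nat) + Poly_Mapping.single b 1) \<longleftrightarrow> k \<in> {a, b}"
    using assms by (cases "k = a"; cases "k = b") (auto simp: in_keys_iff lookup_add lookup_single)
qed

abbreviation monom_value :: "(nat \<Rightarrow> 'a::comm_semiring_1) \<Rightarrow> monom \<Rightarrow> 'a" where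
  "monom_value a m \<equiv> \<Prod>j\<in>Poly_Mapping.keys m. a j ^ Poly_Mapping.lookup m j"

lemma monom_value_eq_0:
  assumes "j \<in> Poly_Mapping.keys m" "a j = 0"
  shows "monom_value a m = 0"
  using assms by (intro prod_zero bexI[of _ j]) (auto simp: in_keys_iff zero_power)

lemma mpoly_eval_monom_poly: "mpoly_eval a (monom_poly M :: 'a::comm_ring_1 mpoly) = monom_value a M"
  unfolding mpoly_eval_def keys_monom_poly by (simp add: monom_poly_def)

lemma monom_value_scale:
  fixes a :: "nat \<Rightarrow> 'a::comm_semiring_1"
  shows "monom_value (\<lambda>j. t * a j) m = t ^ mdeg m * monom_value a m"
  by (simp add: mdeg_def power_mult_distrib prod.distrib power_sum)

lemma monom_value_axis_point:
  fixes x :: "'a::comm_semiring_1"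
  shows "monom_value (\<lambda>j. if j = p then x else 0) m =
    (if Poly_Mapping.keys m \<subseteq> {p} then x ^ Poly_Mapping.lookup m p else 0)"
proof (cases "Poly_Mapping.keys m \<subseteq> {p}")
  case True
  then consider "Poly_Mapping.keys m = {}" | "Poly_Mapping.keys m = {p}" by blast
  then show ?thesis
    by cases (auto simp: in_keys_iff)
next
  case False
  then obtain j where "j \<in> Poly_Mapping.keys m" "j \<noteq> p" by blast
  then show ?thesis using False by (subst monom_value_eq_0[of j]) auto
qed

lemma mpoly_eval_eq_0_if_no_pure_power:
  fixes g :: "'a::comm_semiring_1 mpoly"
  assumes "g \<in> polys_in B"
    and no_pure: "\<forall>m\<in>Poly_Mapping.keys g. \<not> Poly_Mapping.keys m \<subseteq> {p}"
    and "\<forall>k\<in>B - {p}. a k = 0"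
  shows "mpoly_eval a g = 0"
proof -
  have "monom_value a m = 0" if m: "m \<in> Poly_Mapping.keys g" for m
  proof -
    obtain k where k: "k \<in> Poly_Mapping.keys m" "k \<noteq> p" using no_pure m by blast
    have "k \<in> B" using assms(1) m k(1) unfolding polys_in_def mvars_def by blast
    then show ?thesis using assms(3) k by (intro monom_value_eq_0[of k]) auto
  qed
  then show ?thesis unfolding mpoly_eval_def by (intro sum.neutral) simp
qed

definition restrict_vars :: "nat set \<Rightarrow> 'a::zero mpoly \<Rightarrow> 'a mpoly" where
  "restrict_vars B f = Poly_Mapping.mapp (\<lambda>m v. if Poly_Mapping.keys m \<subseteq> B then v else 0) f"

lemma lookup_restrict_vars:
  "Poly_Mapping.lookup (restrict_vars B f) m =
    (if Poly_Mapping.keys m \<subseteq> B then Poly_Mapping.lookup f m else 0)"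
  unfolding restrict_vars_def lookup_mapp by (auto simp: when_def in_keys_iff)

lemma keys_restrict_vars:
  "Poly_Mapping.keys (restrict_vars B f) = {m \<in> Poly_Mapping.keys f. Poly_Mapping.keys m \<subseteq> B}"
  by (rule set_eqI) (simp add: in_keys_iff lookup_restrict_vars)

lemma restrict_vars_in_polys_in: "restrict_vars B f \<in> polys_in B"
  by (auto simp: polys_in_def mvars_def keys_restrict_vars)

lemma restrict_vars_polys_in: "f \<in> polys_in V \<Longrightarrow> restrict_vars B f \<in> polys_in V"
  by (auto simp: polys_in_def mvars_def keys_restrict_vars)

lemma mpoly_eval_restrict_vars:
  fixes f :: "'a::comm_semiring_1 mpoly"
  assumes "\<And>j. j \<notin> B \<Longrightarrow> a j = 0"
  shows "mpoly_eval a (restrict_vars B f) = mpoly_eval a f"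
  unfolding mpoly_eval_def
proof (rule sum.mono_neutral_cong_left)
  show "Poly_Mapping.keys (restrict_vars B f) \<subseteq> Poly_Mapping.keys f"
    by (auto simp: keys_restrict_vars)
  show "\<forall>m\<in>Poly_Mapping.keys f - Poly_Mapping.keys (restrict_vars B f).
          Poly_Mapping.lookup f m * monom_value a m = 0"
  proof
    fix m assume "m \<in> Poly_Mapping.keys f - Poly_Mapping.keys (restrict_vars B f)"
    then obtain j where "j \<in> Poly_Mapping.keys m" "j \<notin> B" by (auto simp: keys_restrict_vars)
    then show "Poly_Mapping.lookup f m * monom_value a m = 0"
      using assms monom_value_eq_0[of j m a] by simp
  qed
qed (auto simp: keys_restrict_vars lookup_restrict_vars)

lemma mpoly_eval_scale_homogeneous:
  fixes f :: "'a::comm_semiring_1 mpoly"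
  assumes "homogeneous f" "m0 \<in> Poly_Mapping.keys f"
  shows "mpoly_eval (\<lambda>j. t * a j) f = t ^ mdeg m0 * mpoly_eval a f"
proof -
  have "mdeg m = mdeg m0" if "m \<in> Poly_Mapping.keys f" for m
    using assms that unfolding homogeneous_def by blast
  then show ?thesis
    unfolding mpoly_eval_def monom_value_scale sum_distrib_left
    by (intro sum.cong) (simp_all add: mult.left_commute)
qed

lemma proj_closed_subset_proj_points: "proj_closed n Z \<Longrightarrow> Z \<subseteq> proj_points n"
  unfolding proj_closed_def proj_zero_set_def by auto

lemma proj_closed_scale:
  fixes Z :: "(nat \<Rightarrow> 'a::field) set"
  assumes "proj_closed n Z" "a \<in> Z" "t \<noteq> 0"
  shows "(\<lambda>j. t * a j) \<in> Z"
proof -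
  obtain F where F: "\<forall>f\<in>F. homogeneous f" "Z = proj_zero_set n F"
    using assms(1) unfolding proj_closed_def by blast
  have a: "a \<in> proj_points n" "\<forall>f\<in>F. mpoly_eval a f = 0"
    using assms(2) F(2) by (auto simp: proj_zero_set_def)
  have "mpoly_eval (\<lambda>j. t * a j) f = 0" if "f \<in> F" for f
  proof (cases "f = 0")
    case False
    then obtain m0 where "m0 \<in> Poly_Mapping.keys f" by fastforce
    then show ?thesis using mpoly_eval_scale_homogeneous[of f m0 t a] F(1) a(2) that by simp
  qed (simp add: mpoly_eval_def)
  moreover have "(\<lambda>j. t * a j) \<in> proj_points n" using a(1) assms(3) by (auto simp: proj_points_def)
  ultimately show ?thesis using F(2) by (simp add: proj_zero_set_def)
qed

lemma monom_eq_if_keys_singleton: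
  assumes "Poly_Mapping.keys (m::monom) \<subseteq> {p}" "Poly_Mapping.keys m' \<subseteq> {p}"
    "Poly_Mapping.lookup m p = Poly_Mapping.lookup m' p"
  shows "m = m'"
  using assms by (intro poly_mapping_eqI) (metis in_keys_iff singletonD subsetD)

lemma no_pure_power_if_vanishes_on_axis:
  fixes g :: "'a::field mpoly"
  assumes "infinite (UNIV :: 'a set)"
    and vanish: "\<And>x. x \<noteq> 0 \<Longrightarrow> mpoly_eval (\<lambda>j. if j = p then x else 0) g = 0"
  shows "\<forall>m\<in>Poly_Mapping.keys g. \<not> Poly_Mapping.keys m \<subseteq> {p}"
proof (rule ccontr)
  assume "\<not> ?thesis"
  then obtain m0 where m0: "m0 \<in> Poly_Mapping.keys g" "Poly_Mapping.keys m0 \<subseteq> {p}" by blast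
  define S where "S = {m \<in> Poly_Mapping.keys g. Poly_Mapping.keys m \<subseteq> {p}}"
  define P where
    "P = (\<Sum>m\<in>S. Polynomial.monom (Poly_Mapping.lookup g m) (Poly_Mapping.lookup m p))"
  have evalP: "poly P x = mpoly_eval (\<lambda>j. if j = p then x else 0) g" for x
  proof -
    have "mpoly_eval (\<lambda>j. if j = p then x else 0) g =
      (\<Sum>m\<in>Poly_Mapping.keys g. if Poly_Mapping.keys m \<subseteq> {p}
         then Poly_Mapping.lookup g m * x ^ Poly_Mapping.lookup m p else 0)"
      unfolding mpoly_eval_def monom_value_axis_point by (rule sum.cong) auto
    also have "\<dots> = (\<Sum>m\<in>S. Poly_Mapping.lookup g m * x ^ Poly_Mapping.lookup m p)"
      unfolding S_def by (simp add: sum.inter_filter)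
    also have "\<dots> = poly P x" unfolding P_def by (simp add: poly_sum poly_monom)
    finally show ?thesis by simp
  qed
  have "P = 0"
  proof (rule ccontr)
    assume "P \<noteq> 0"
    then have "finite {x. poly P x = 0}" by (rule poly_roots_finite)
    moreover have "UNIV - {0} \<subseteq> {x. poly P x = 0}" using vanish evalP by auto
    ultimately have "finite (UNIV - {0::'a})" by (rule finite_subset[rotated])
    then show False using assms(1) by simp
  qed
  have "Polynomial.coeff P (Poly_Mapping.lookup m0 p) =
     (\<Sum>m\<in>S. if m = m0 then Poly_Mapping.lookup g m else 0)"
    unfolding P_def coeff_sum coeff_monom
  proof (rule sum.cong[OF refl])
    fix m assume "m \<in> S"
    then show "(if Poly_Mapping.lookup m p = Poly_Mapping.lookup m0 p then Poly_Mapping.lookup g m else 0) =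
          (if m = m0 then Poly_Mapping.lookup g m else 0)"
      using monom_eq_if_keys_singleton[of m p m0] m0 unfolding S_def by auto
  qed
  also have "\<dots> = Poly_Mapping.lookup g m0" using m0 unfolding S_def by simp
  finally show False using \<open>P = 0\<close> m0(1) by (simp add: in_keys_iff)
qed

lemma vanishing_ideal_no_pure_power:
  fixes Z :: "(nat \<Rightarrow> 'a::field) set"
  assumes "infinite (UNIV :: 'a set)" "proj_closed n Z"
    and b: "b \<in> Z" "\<And>k. b k \<noteq> 0 \<Longrightarrow> k = p"
    and g: "g \<in> vanishing_ideal n Z"
  shows "\<forall>m\<in>Poly_Mapping.keys g. \<not> Poly_Mapping.keys m \<subseteq> {p}"
proof (rule no_pure_power_if_vanishes_on_axis[OF assms(1)])
  have "b \<in> proj_points n" using b(1) proj_closed_subset_proj_points[OF assms(2)] by blast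
  then obtain k where "b k \<noteq> 0" unfolding proj_points_def by blast
  then have bp: "b p \<noteq> 0" using b(2) by metis
  fix x :: 'a assume "x \<noteq> 0"
  then have "(\<lambda>j. (x / b p) * b j) \<in> Z" using proj_closed_scale[OF assms(2) b(1), of "x / b p"] bp by simp
  moreover have "(\<lambda>j. (x / b p) * b j) = (\<lambda>j. if j = p then x else 0)"
  proof
    fix j show "(x / b p) * b j = (if j = p then x else 0)"
      using b(2)[of j] bp by (cases "j = p") auto
  qed
  ultimately show "mpoly_eval (\<lambda>j. if j = p then x else 0) g = 0"
    using g unfolding vanishing_ideal_def by auto
qed

lemma ideal_gen_superset: "G \<subseteq> ideal_gen n G"
  unfolding ideal_gen_def by blast

lemma ideal_gen_least: "A \<subseteq> ideal_gen n B \<Longrightarrow> ideal_gen n A \<subseteq> ideal_gen n B"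
  unfolding ideal_gen_def by blast

lemma ideal_gen_mono: "A \<subseteq> B \<Longrightarrow> ideal_gen n A \<subseteq> ideal_gen n B"
  unfolding ideal_gen_def by blast

lemma ideal_gen_mult: "x \<in> G \<Longrightarrow> h \<in> polys_in {0..n} \<Longrightarrow> h * x \<in> ideal_gen n G"
  unfolding ideal_gen_def is_ideal_def by blast

lemma lead_monoms_mono: "J \<subseteq> J' \<Longrightarrow> lead_monoms ord J \<subseteq> lead_monoms ord J'"
  unfolding lead_monoms_def by blast

locale coordinate_chain =
  fixes n l :: nat
    and ns :: "nat \<Rightarrow> nat"
    and Xs :: "nat \<Rightarrow> (nat \<Rightarrow> 'a::field) set"
  assumes infinite_field: "infinite (UNIV :: 'a set)"
    and l_pos: "l \<ge> 1"
    and ns_0: "ns 0 = 0" and ns_l: "ns l = n"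
    and ns_strict_mono: "\<And>i. i < l \<Longrightarrow> ns i < ns (Suc i)"
    and proj_closed_Xs: "\<And>i. i \<in> {1..l} \<Longrightarrow> proj_closed n (Xs i)"
    and adjacent_meet: "\<And>i. i \<in> {1..<l} \<Longrightarrow> Xs i \<inter> Xs (Suc i) \<noteq> {}"
    and coords: "\<And>i a. i \<in> {1..l} \<Longrightarrow> a \<in> Xs i \<Longrightarrow>
      (\<forall>j<ns (i - 1). a j = 0) \<and> (\<forall>j. ns i < j \<and> j \<le> n \<longrightarrow> a j = 0)"
begin

abbreviation block :: "nat \<Rightarrow> nat set" where
  "block i \<equiv> {ns (i - 1)..ns i}"

abbreviation chain_ideal :: "'a mpoly set" where
  "chain_ideal \<equiv> vanishing_ideal n (\<Union>i\<in>{1..l}. Xs i)"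

abbreviation cross_monomials :: "'a mpoly set" where
  "cross_monomials \<equiv> \<Union>i\<in>{1..<l}. {var a * var b | a b.
     ns (i - 1) \<le> a \<and> a < ns i \<and> ns i < b \<and> b \<le> n}"

lemma ns_le:
  assumes "i \<le> j" "j \<le> l"
  shows "ns i \<le> ns j"
proof -
  have "ns (min k l) \<le> ns (min (Suc k) l)" for k
    using ns_strict_mono[of k] by (cases "k < l") (auto simp: min_def)
  then show ?thesis using lift_Suc_mono_le[of "\<lambda>k. ns (min k l)"] assms by fastforce
qed

lemma support_in_block:
  assumes i: "i \<in> {1..l}" and a: "a \<in> Xs i" and "a k \<noteq> 0"
  shows "k \<in> block i"
proof -
  have "a \<in> proj_points n" using proj_closed_subset_proj_points[OF proj_closed_Xs[OF i]] a by blast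
  then have "k \<le> n" using \<open>a k \<noteq> 0\<close> unfolding proj_points_def by (cases "k \<le> n") auto
  then show ?thesis using coords[OF i a] \<open>a k \<noteq> 0\<close> by (meson atLeastAtMost_iff not_le)
qed

lemma adjacent_meet_point:
  assumes "i \<in> {1..<l}"
  obtains b where "b \<in> Xs i" "b \<in> Xs (Suc i)" "\<forall>k. b k \<noteq> 0 \<longrightarrow> k = ns i"
proof -
  obtain b where b: "b \<in> Xs i" "b \<in> Xs (Suc i)" using adjacent_meet[OF assms] by blast
  have "k = ns i" if "b k \<noteq> 0" for k
    using support_in_block[OF _ b(1) that] support_in_block[OF _ b(2) that] assms by fastforce
  then show thesis using that b by blast
qed

lemma other_component_concentrated:
  assumes i: "i \<in> {1..l}" and j: "j \<in> {1..l}" "j \<noteq> i" and a: "a \<in> Xs j"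
  obtains p b where "b \<in> Xs i" "\<forall>k. b k \<noteq> 0 \<longrightarrow> k = p" "\<forall>k\<in>block i - {p}. a k = 0"
proof (cases "i < j")
  case True
  have "i \<in> {1..<l}" using True i j by auto
  then obtain b where b: "b \<in> Xs i" "\<forall>k. b k \<noteq> 0 \<longrightarrow> k = ns i"
    using adjacent_meet_point by blast
  have "a k = 0" if "k \<in> block i - {ns i}" for k
  proof -
    have "k < ns i" using that by auto
    also have "ns i \<le> ns (j - 1)" using True j by (intro ns_le) auto
    finally show ?thesis using support_in_block[OF j(1) a, of k] by force
  qed
  then show thesis using b by (intro that[of b "ns i"]) auto
next
  case False
  then have "j < i" using j(2) by simp
  have "i - 1 \<in> {1..<l}" using \<open>j < i\<close> i j by auto
  then obtain b where "b \<in> Xs (Suc (i - 1))" "\<forall>k. b k \<noteq> 0 \<longrightarrow> k = ns (i - 1)"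
    using adjacent_meet_point by blast
  moreover have "Suc (i - 1) = i" using \<open>j < i\<close> by simp
  ultimately have b: "b \<in> Xs i" "\<forall>k. b k \<noteq> 0 \<longrightarrow> k = ns (i - 1)" by simp_all
  have "a k = 0" if "k \<in> block i - {ns (i - 1)}" for k
  proof -
    have "ns j \<le> ns (i - 1)" using \<open>j < i\<close> i by (intro ns_le) auto
    also have "ns (i - 1) < k" using that by auto
    finally show ?thesis using support_in_block[OF j(1) a, of k] by force
  qed
  then show thesis using b by (intro that[of b "ns (i - 1)"]) auto
qed

lemma block_vanishing_ideal_subset:
  assumes i: "i \<in> {1..l}"
  shows "vanishing_ideal n (Xs i) \<inter> polys_in (block i) \<subseteq> chain_ideal"
proof
  fix g assume g: "g \<in> vanishing_ideal n (Xs i) \<inter> polys_in (block i)"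
  have "mpoly_eval a g = 0" if j: "j \<in> {1..l}" and a: "a \<in> Xs j" for j a
  proof (cases "j = i")
    case True
    then show ?thesis using g a by (auto simp: vanishing_ideal_def)
  next
    case False
    obtain p b where b: "b \<in> Xs i" "\<forall>k. b k \<noteq> 0 \<longrightarrow> k = p"
      and a0: "\<forall>k\<in>block i - {p}. a k = 0"
      by (rule other_component_concentrated[OF i j False a])
    have "\<forall>m\<in>Poly_Mapping.keys g. \<not> Poly_Mapping.keys m \<subseteq> {p}"
      using g b(2) by (intro vanishing_ideal_no_pure_power[OF infinite_field proj_closed_Xs[OF i] b(1)]) auto
    then show ?thesis using g a0 by (intro mpoly_eval_eq_0_if_no_pure_power[of g "block i" p]) auto
  qed
  then show "g \<in> chain_ideal" using g by (auto simp: vanishing_ideal_def)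
qed

lemma cross_monomials_subset_lead_monoms:
  assumes mo: "monomial_order n ord"
  shows "cross_monomials \<subseteq> lead_monoms ord chain_ideal"
proof
  fix t assume "t \<in> cross_monomials"
  then obtain i a b where i: "i \<in> {1..<l}" and t: "t = var a * var b"
    and ab: "ns (i - 1) \<le> a" "a < ns i" "ns i < b" "b \<le> n"
    by auto
  define M where "M = Poly_Mapping.single a (1::nat) + Poly_Mapping.single b 1"
  have keys_M: "Poly_Mapping.keys M = {a, b}" unfolding M_def using ab by (intro keys_two_vars) simp
  have tM: "t = monom_poly M" unfolding t M_def var_def monom_poly_mult ..
  have t_poly: "t \<in> polys_in {0..n}" unfolding tM using keys_M ab by (intro monom_poly_in_polys_in) auto
  have ab_vanish: "x a = 0 \<or> x b = 0" if j: "j \<in> {1..l}" and x: "x \<in> Xs j" for j x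
  proof (cases "j \<le> i")
    case True
    then have "ns j \<le> ns i" using i by (intro ns_le) auto
    then show ?thesis using support_in_block[OF j x, of b] ab by auto
  next
    case False
    then have "ns i \<le> ns (j - 1)" using j by (intro ns_le) auto
    then show ?thesis using support_in_block[OF j x, of a] ab by auto
  qed
  have "mpoly_eval x t = 0" if "j \<in> {1..l}" "x \<in> Xs j" for j x
    using ab_vanish[OF that] monom_value_eq_0[of a M x] monom_value_eq_0[of b M x] keys_M
    unfolding tM mpoly_eval_monom_poly by blast
  then have "t \<in> chain_ideal" using t_poly by (auto simp: vanishing_ideal_def)
  moreover have "M \<in> monoms_in {0..n}" using keys_M ab by (auto simp: monoms_in_def)
  then have "lead_monom ord t = M"
    by (intro lead_monom_eqI[OF mo t_poly]) (simp_all add: tM keys_monom_poly monomial_order_refl[OF mo])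
  ultimately show "t \<in> lead_monoms ord chain_ideal"
    unfolding lead_monoms_def by (intro CollectI exI[of _ t] conjI) (simp_all add: tM monom_poly_nonzero)
qed

lemma subset_block_if_not_crossing:
  assumes K: "K \<subseteq> {0..n}"
    and not_crossing: "\<not> (\<exists>i\<in>{1..<l}. \<exists>a\<in>K. \<exists>b\<in>K. ns (i - 1) \<le> a \<and> a < ns i \<and> ns i < b)"
  shows "\<exists>i\<in>{1..l}. K \<subseteq> block i"
proof (cases "K = {}")
  case True
  then show ?thesis using l_pos by auto
next
  case False
  define a where "a = Min K"
  have "finite K" using K finite_subset by blast
  then have aK: "a \<in> K" and a_min: "\<And>b. b \<in> K \<Longrightarrow> a \<le> b" using False unfolding a_def by auto
  show ?thesis
  proof (cases "a < n")
    case False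
    then have "K \<subseteq> {n..n}" using a_min K by fastforce
    moreover have "ns (l - 1) \<le> n" using ns_le[of "l - 1" l] ns_l by simp
    ultimately show ?thesis using l_pos ns_l by (intro bexI[of _ l]) auto
  next
    case True
    define i where "i = (LEAST i. a < ns i)"
    have a_below: "a < ns i" unfolding i_def by (rule LeastI[of _ l]) (use True ns_l in simp)
    have "i \<le> l" unfolding i_def by (rule Least_le) (use True ns_l in simp)
    have "i \<noteq> 0" using a_below ns_0 by (metis not_less0)
    have a_above: "ns (i - 1) \<le> a"
      using not_less_Least[of "i - 1" "\<lambda>i. a < ns i"] \<open>i \<noteq> 0\<close> by (simp add: i_def)
    show ?thesis
    proof (cases "i = l")
      case True
      then show ?thesis using a_above a_min K ns_l \<open>i \<noteq> 0\<close> by (intro bexI[of _ l]) force+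
    next
      case False
      then have "i \<in> {1..<l}" using \<open>i \<le> l\<close> \<open>i \<noteq> 0\<close> by auto
      then have "\<forall>b\<in>K. b \<le> ns i" using not_crossing aK a_above a_below by fastforce
      then show ?thesis using a_above a_min \<open>i \<le> l\<close> \<open>i \<noteq> 0\<close> by (intro bexI[of _ i]) force+
    qed
  qed
qed

lemma lead_monom_in_block:
  assumes mo: "monomial_order n ord"
    and f: "f \<in> chain_ideal" "f \<noteq> 0" and i: "i \<in> {1..l}"
    and M_block: "Poly_Mapping.keys (lead_monom ord f) \<subseteq> block i"
  shows "monom_poly (lead_monom ord f) \<in>
    lead_monoms ord (vanishing_ideal n (Xs i) \<inter> polys_in (block i))"
proof -
  define g where "g = restrict_vars (block i) f"
  have f_poly: "f \<in> polys_in {0..n}" using f(1) by (simp add: vanishing_ideal_def)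
  then have g_poly: "g \<in> polys_in {0..n}" unfolding g_def by (rule restrict_vars_polys_in)
  have "lead_monom ord f \<in> Poly_Mapping.keys g"
    using lead_monom_greatest(1)[OF mo f_poly f(2)] M_block by (simp add: g_def keys_restrict_vars)
  moreover have "Poly_Mapping.keys g \<subseteq> Poly_Mapping.keys f" by (auto simp: g_def keys_restrict_vars)
  ultimately have lead_g: "lead_monom ord g = lead_monom ord f"
    by (rule lead_monom_keys_subset[OF mo f_poly f(2) g_poly, rotated])
  have "g \<noteq> 0" using \<open>lead_monom ord f \<in> Poly_Mapping.keys g\<close> by auto
  have "mpoly_eval a g = mpoly_eval a f" if a: "a \<in> Xs i" for a
    unfolding g_def using support_in_block[OF i a] by (intro mpoly_eval_restrict_vars) blast
  then have "g \<in> vanishing_ideal n (Xs i)"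
    using f(1) i g_poly by (auto simp: vanishing_ideal_def)
  moreover have "g \<in> polys_in (block i)" unfolding g_def by (rule restrict_vars_in_polys_in)
  ultimately show ?thesis
    unfolding lead_monoms_def using lead_g \<open>g \<noteq> 0\<close> by (intro CollectI exI[of _ g]) simp
qed

lemma lead_monoms_chain_ideal_subset:
  assumes mo: "monomial_order n ord"
  shows "lead_monoms ord chain_ideal \<subseteq> ideal_gen n
    ((\<Union>i\<in>{1..l}. lead_monoms ord (vanishing_ideal n (Xs i) \<inter> polys_in (block i))) \<union>
      cross_monomials)" (is "_ \<subseteq> ideal_gen n ?G")
proof
  fix t assume "t \<in> lead_monoms ord chain_ideal"
  then obtain f where f: "f \<in> chain_ideal" "f \<noteq> 0" and t: "t = monom_poly (lead_monom ord f)"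
    unfolding lead_monoms_def by blast
  define M where "M = lead_monom ord f"
  have f_poly: "f \<in> polys_in {0..n}" using f(1) by (simp add: vanishing_ideal_def)
  have M_keys: "Poly_Mapping.keys M \<subseteq> {0..n}"
    using keys_in_monoms_in[OF f_poly lead_monom_greatest(1)[OF mo f_poly f(2)]]
    by (simp add: M_def monoms_in_def)
  show "t \<in> ideal_gen n ?G"
  proof (cases "\<exists>i\<in>{1..<l}. \<exists>a\<in>Poly_Mapping.keys M. \<exists>b\<in>Poly_Mapping.keys M.
                 ns (i - 1) \<le> a \<and> a < ns i \<and> ns i < b")
    case True
    then obtain i a b where i: "i \<in> {1..<l}" and ab_M: "a \<in> Poly_Mapping.keys M" "b \<in> Poly_Mapping.keys M"
      and ab: "ns (i - 1) \<le> a" "a < ns i" "ns i < b" by blast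
    have "b \<le> n" using ab_M M_keys by auto
    then have "var a * var b \<in> cross_monomials" using i ab by blast
    then have "var a * var b \<in> ?G" by (rule UnI2)
    moreover have "a \<noteq> b" using ab by simp
    then obtain M' where M': "Poly_Mapping.keys M' \<subseteq> Poly_Mapping.keys M"
      "M = M' + (Poly_Mapping.single a 1 + Poly_Mapping.single b 1)"
      using monom_split_off_two_vars[OF ab_M] by blast
    moreover have "(monom_poly M' :: 'a mpoly) \<in> polys_in {0..n}"
      using M' M_keys by (intro monom_poly_in_polys_in) blast
    ultimately have "monom_poly M' * (var a * var b) \<in> ideal_gen n ?G"
      by (intro ideal_gen_mult)
    then show ?thesis unfolding t M_def[symmetric] var_def monom_poly_mult M'(2) .
  next
    case False
    then obtain i where i: "i \<in> {1..l}" and M_block: "Poly_Mapping.keys M \<subseteq> block i"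
      using subset_block_if_not_crossing[OF M_keys] by blast
    have "t \<in> lead_monoms ord (vanishing_ideal n (Xs i) \<inter> polys_in (block i))"
      unfolding t using lead_monom_in_block[OF mo f i M_block[unfolded M_def]] .
    with i have "t \<in> ?G" by blast
    then show ?thesis by (rule subsetD[OF ideal_gen_superset])
  qed
qed

end

theorem corollary3p2:
  fixes n l :: nat
    and ns :: "nat \<Rightarrow> nat"
    and Xs :: "nat \<Rightarrow> (nat \<Rightarrow> 'a::field_char_0) set"
    and ord :: "monom \<Rightarrow> monom \<Rightarrow> bool"
  assumes closed: "alg_closed TYPE('a)"
    and l_pos: "l \<ge> 1"
    and ns0: "ns 0 = 0" and nsl: "ns l = n"
    and ns_mono: "\<And>i. i < l \<Longrightarrow> ns i < ns (Suc i)"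
    and var: "\<And>i. i \<in> {1..l} \<Longrightarrow> proj_variety n (Xs i)"
    and chain: "\<And>i j. i \<in> {1..l} \<Longrightarrow> j \<in> {1..l} \<Longrightarrow> i \<noteq> j \<Longrightarrow>
                  (Xs i \<inter> Xs j \<noteq> {} \<longleftrightarrow> (i = Suc j \<or> j = Suc i))"
    and coords: "\<And>i a. i \<in> {1..l} \<Longrightarrow> a \<in> Xs i \<Longrightarrow>
                  (\<forall>j<ns (i - 1). a j = 0) \<and> (\<forall>j. ns i < j \<and> j \<le> n \<longrightarrow> a j = 0)"
    and mo: "monomial_order n ord"
  defines "IX \<equiv> vanishing_ideal n (\<Union>i\<in>{1..l}. Xs i)"
    and "Tgens \<equiv> (\<Union>i\<in>{1..<l}. {var a * var b | a b.
                    ns (i - 1) \<le> a \<and> a < ns i \<and> ns i < b \<and> b \<le> n})"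
  shows "initial_ideal n ord IX =
           ideal_gen n ((\<Union>i\<in>{1..l}. lead_monoms ord
               (vanishing_ideal n (Xs i) \<inter> polys_in {ns (i - 1)..ns i})) \<union> Tgens)
      \<and> initial_ideal n ord IX =
           ideal_gen n ((\<Union>i\<in>{1..l}. lead_monoms ord
               (IX \<inter> polys_in {ns (i - 1)..ns i})) \<union> Tgens)"
proof -
  interpret coordinate_chain n l ns Xs
  proof
    show "proj_closed n (Xs i)" if "i \<in> {1..l}" for i
      using var[OF that] by (simp add: proj_variety_def)
    show "Xs i \<inter> Xs (Suc i) \<noteq> {}" if "i \<in> {1..<l}" for i
      using chain[of i "Suc i"] that by simp
  qed (use infinite_UNIV_char_0 l_pos ns0 nsl ns_mono coords in auto)
  let ?G1 = "(\<Union>i\<in>{1..l}. lead_monoms ord (vanishing_ideal n (Xs i) \<inter> polys_in (block i))) \<union> Tgens"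
  let ?G2 = "(\<Union>i\<in>{1..l}. lead_monoms ord (IX \<inter> polys_in (block i))) \<union> Tgens"
  have "lead_monoms ord IX \<subseteq> ideal_gen n ?G1"
    unfolding IX_def Tgens_def by (rule lead_monoms_chain_ideal_subset[OF mo])
  then have G1: "initial_ideal n ord IX \<subseteq> ideal_gen n ?G1"
    unfolding initial_ideal_def by (rule ideal_gen_least)
  have "?G1 \<subseteq> ?G2"
    using block_vanishing_ideal_subset unfolding IX_def
    by (intro Un_mono UN_mono lead_monoms_mono) auto
  then have G12: "ideal_gen n ?G1 \<subseteq> ideal_gen n ?G2" by (rule ideal_gen_mono)
  have "?G2 \<subseteq> lead_monoms ord IX"
  proof (rule Un_least)
    show "(\<Union>i\<in>{1..l}. lead_monoms ord (IX \<inter> polys_in (block i))) \<subseteq> lead_monoms ord IX"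
      by (intro UN_least lead_monoms_mono) blast
    show "Tgens \<subseteq> lead_monoms ord IX"
      unfolding IX_def Tgens_def by (rule cross_monomials_subset_lead_monoms[OF mo])
  qed
  then have G2: "ideal_gen n ?G2 \<subseteq> initial_ideal n ord IX"
    unfolding initial_ideal_def by (rule ideal_gen_mono)
  from G1 G12 G2 show ?thesis by blast
qed

end
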